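(* For every integer $n\ge 4$, $$\mathrm{wdim}_k(K_n\times K_n)=\begin{cases} n^2, & k\in\{2n+1,2n+2\};\\ n^2-1, & k=2n;\\ n^2-n, & k=2n-1 \text{ and } n\ge 5;\\ 13, & (n,k)=(4,7).\end{cases}$$
   Context: $K_n\times K_n$ is the direct product of two complete graphs on $n$ vertices: vertex set $[n]\times[n]$ with $[n]=\{1,\dots,n\}$, and $(i,j)$ adjacent to $(i',j')$ iff $i\ne i'$ and $j\ne j'$. For a connected graph $G$ with distance $d_G$, vertices $x,y,z$ and $S\subseteq V(G)$, let $\Delta_z(x,y)=|d_G(x,z)-d_G(y,z)|$ and $\Delta_S(x,y)=\sum_{z\in S}\Delta_z(x,y)$. A set $S$ is a weak $k$-resolving set if $\Delta_S(x,y)\ge k$ for all distinct $x,y\in V(G)$, and $\mathrm{wdim}_k(G)$ is the minimum cardinality of a weak $k$-resolving set of $G$. *)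

theory Defs
  imports Main
begin

definition edge_rel :: "'a set \<Rightarrow> ('a \<Rightarrow> 'a \<Rightarrow> bool) \<Rightarrow> ('a \<times> 'a) set" where
  "edge_rel V E = {(a, b). a \<in> V \<and> b \<in> V \<and> E a b}"

definition gdist :: "'a set \<Rightarrow> ('a \<Rightarrow> 'a \<Rightarrow> bool) \<Rightarrow> 'a \<Rightarrow> 'a \<Rightarrow> nat" where
  "gdist V E x y = (LEAST k. (x, y) \<in> (edge_rel V E) ^^ k)"

definition delta_z :: "'a set \<Rightarrow> ('a \<Rightarrow> 'a \<Rightarrow> bool) \<Rightarrow> 'a \<Rightarrow> 'a \<Rightarrow> 'a \<Rightarrow> nat" where
  "delta_z V E z x y = nat \<bar>int (gdist V E x z) - int (gdist V E y z)\<bar>"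

definition delta_S :: "'a set \<Rightarrow> ('a \<Rightarrow> 'a \<Rightarrow> bool) \<Rightarrow> 'a set \<Rightarrow> 'a \<Rightarrow> 'a \<Rightarrow> nat" where
  "delta_S V E S x y = (\<Sum>z\<in>S. delta_z V E z x y)"

definition weak_k_resolving :: "'a set \<Rightarrow> ('a \<Rightarrow> 'a \<Rightarrow> bool) \<Rightarrow> nat \<Rightarrow> 'a set \<Rightarrow> bool" where
  "weak_k_resolving V E k S \<longleftrightarrow> S \<subseteq> V \<and>
     (\<forall>x\<in>V. \<forall>y\<in>V. x \<noteq> y \<longrightarrow> delta_S V E S x y \<ge> k)"

definition wdim :: "'a set \<Rightarrow> ('a \<Rightarrow> 'a \<Rightarrow> bool) \<Rightarrow> nat \<Rightarrow> nat" where
  "wdim V E k = (LEAST c. \<exists>S. weak_k_resolving V E k S \<and> card S = c)"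

text \<open>Direct product K_n x K_n on [n] x [n].\<close>

definition KK_V :: "nat \<Rightarrow> (nat \<times> nat) set" where
  "KK_V n = {1..n} \<times> {1..n}"

definition KK_E :: "(nat \<times> nat) \<Rightarrow> (nat \<times> nat) \<Rightarrow> bool" where
  "KK_E u v \<longleftrightarrow> fst u \<noteq> fst v \<and> snd u \<noteq> snd v"

end

(*
  For n >= 3 two vertices of K_n x K_n are at distance 0, 1 or 2, so a single vertex z contributes
  at most 2 to Delta_S(x, y), and at most 1 when x and y are adjacent.  Summing over all vertices,
  Delta_V(x, y) is 2n + 2 for distinct non-adjacent x, y (same row or column) and 4n - 6 for
  adjacent ones.  So S is weak k-resolving iff the loss Delta_{V - S}(x, y) caused by the missing
  vertices never exceeds Delta_V(x, y) - k.

  Upper bounds: omit nothing (k <= 2n + 2), one vertex (k = 2n), the whole diagonal, whose loss is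
  at most 3 on non-adjacent and at most n on adjacent pairs (k = 2n - 1, n >= 5), or three diagonal
  vertices (n = 4, k = 7).  Lower bounds: one missing vertex costs 2 on a pair in its row; two
  missing vertices cost 4 on themselves if they share a line and 3 on a suitable pair otherwise;
  more than n missing vertices always include two in a common line; and four pairwise adjacent
  missing vertices cost 4 on a suitable adjacent pair.
*)

theory Submission
  imports Defs
begin

lemma gdist_self: "gdist V E x x = 0"
  unfolding gdist_def by (rule Least_equality) auto

lemma gdist_edge:
  assumes "x \<in> V" "y \<in> V" "E x y" "x \<noteq> y"
  shows "gdist V E x y = 1"
  unfolding gdist_def
proof (rule Least_equality)
  show "(x, y) \<in> edge_rel V E ^^ 1"
    using assms by (simp add: edge_rel_def)
  fix k assume "(x, y) \<in> edge_rel V E ^^ k"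
  then show "1 \<le> k"
    using \<open>x \<noteq> y\<close> by (cases k) auto
qed

lemma gdist_common_neighbour:
  assumes "x \<in> V" "y \<in> V" "w \<in> V" "E x w" "E w y" "x \<noteq> y" "\<not> E x y"
  shows "gdist V E x y = 2"
  unfolding gdist_def
proof (rule Least_equality)
  show "(x, y) \<in> edge_rel V E ^^ 2"
    using assms by (auto simp: edge_rel_def numeral_2_eq_2 relcomp.simps)
  fix k assume k: "(x, y) \<in> edge_rel V E ^^ k"
  show "2 \<le> k"
  proof (rule ccontr)
    assume "\<not> 2 \<le> k"
    then have "k = 0 \<or> k = 1"
      by auto
    then show False
      using k \<open>x \<noteq> y\<close> \<open>\<not> E x y\<close> by (auto simp: edge_rel_def)
  qed
qed

lemma delta_S_split:
  assumes "finite V" "S \<subseteq> V"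
  shows "delta_S V E V x y = delta_S V E S x y + delta_S V E (V - S) x y"
  unfolding delta_S_def by (simp add: sum.subset_diff[OF assms(2,1)] add.commute)

lemma weak_k_resolving_iff_loss:
  assumes "finite V"
  shows "weak_k_resolving V E k S \<longleftrightarrow> S \<subseteq> V \<and>
    (\<forall>x\<in>V. \<forall>y\<in>V. x \<noteq> y \<longrightarrow> k + delta_S V E (V - S) x y \<le> delta_S V E V x y)"
proof -
  have "k \<le> delta_S V E S x y \<longleftrightarrow> k + delta_S V E (V - S) x y \<le> delta_S V E V x y"
    if "S \<subseteq> V" for x y
    using delta_S_split[OF assms that, of E x y] by linarith
  then show ?thesis
    unfolding weak_k_resolving_def by blast
qed

lemma not_weak_k_resolving_if_loss:
  assumes "finite V" "W \<subseteq> V - S" "x \<in> V" "y \<in> V" "x \<noteq> y"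
    and "delta_S V E V x y < k + delta_S V E W x y"
  shows "\<not> weak_k_resolving V E k S"
proof
  assume "weak_k_resolving V E k S"
  then have "k + delta_S V E (V - S) x y \<le> delta_S V E V x y"
    using assms(1,3-5) weak_k_resolving_iff_loss by blast
  moreover have "delta_S V E W x y \<le> delta_S V E (V - S) x y"
    unfolding delta_S_def using assms(1,2) by (intro sum_mono2) auto
  ultimately show False
    using assms(6) by linarith
qed

lemma wdim_eqI:
  assumes "weak_k_resolving V E k S" "card S = m"
    and "\<And>S'. S' \<subseteq> V \<Longrightarrow> card S' < m \<Longrightarrow> \<not> weak_k_resolving V E k S'"
  shows "wdim V E k = m"
  unfolding wdim_def
proof (rule Least_equality)
  show "\<exists>S. weak_k_resolving V E k S \<and> card S = m"
    using assms(1,2) by blast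
  fix c assume "\<exists>S. weak_k_resolving V E k S \<and> card S = c"
  then show "m \<le> c"
    using assms(3) unfolding weak_k_resolving_def by (meson not_le)
qed

definition KK_dist :: "nat \<times> nat \<Rightarrow> nat \<times> nat \<Rightarrow> nat" where
  "KK_dist x y = (if x = y then 0 else if KK_E x y then 1 else 2)"

lemma finite_KK_V: "finite (KK_V n)"
  by (simp add: KK_V_def)

lemma card_KK_V: "card (KK_V n) = n\<^sup>2"
  by (simp add: KK_V_def power2_eq_square)

lemma card_KK_V_Diff: "W \<subseteq> KK_V n \<Longrightarrow> card (KK_V n - W) = n\<^sup>2 - card W"
  by (metis card_Diff_subset card_KK_V finite_KK_V finite_subset)

lemma mem_KK_V [simp]: "(a, b) \<in> KK_V n \<longleftrightarrow> a \<in> {1..n} \<and> b \<in> {1..n}"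
  by (simp add: KK_V_def)

lemma ex_avoiding_two:
  fixes a b n :: nat
  assumes "n \<ge> 3"
  shows "\<exists>i\<in>{1..n}. i \<noteq> a \<and> i \<noteq> b"
proof -
  have "\<exists>i\<in>{1, 2, 3}. i \<noteq> a \<and> i \<noteq> b"
    by auto
  then show ?thesis
    using assms by auto
qed

lemma gdist_KK:
  assumes "n \<ge> 3" "x \<in> KK_V n" "y \<in> KK_V n"
  shows "gdist (KK_V n) KK_E x y = KK_dist x y"
proof -
  obtain i where i: "i \<in> {1..n}" "i \<noteq> fst x" "i \<noteq> fst y"
    using ex_avoiding_two[OF assms(1)] by blast
  obtain j where j: "j \<in> {1..n}" "j \<noteq> snd x" "j \<noteq> snd y"
    using ex_avoiding_two[OF assms(1)] by blast
  have "(i, j) \<in> KK_V n" "KK_E x (i, j)" "KK_E (i, j) y"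
    using i j by (auto simp: KK_E_def)
  then show ?thesis
    using assms gdist_self[of "KK_V n" KK_E x] gdist_edge[of x "KK_V n" y KK_E]
      gdist_common_neighbour[of x "KK_V n" y "(i, j)" KK_E]
    by (auto simp: KK_dist_def)
qed

lemma delta_z_KK:
  assumes "n \<ge> 3" "x \<in> KK_V n" "y \<in> KK_V n" "z \<in> KK_V n"
  shows "delta_z (KK_V n) KK_E z x y = nat \<bar>int (KK_dist x z) - int (KK_dist y z)\<bar>"
  using assms by (simp add: delta_z_def gdist_KK)

lemma sum_KK_V: "(\<Sum>z\<in>KK_V n. f z) = (\<Sum>i=1..n. \<Sum>j=1..n. f (i, j))"
  by (simp add: KK_V_def sum.cartesian_product)

lemma swap_in_KK_V [simp]: "prod.swap x \<in> KK_V n \<longleftrightarrow> x \<in> KK_V n"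
  by (cases x) auto

lemma swap_image_KK_V: "prod.swap ` KK_V n = KK_V n"
  by (simp add: KK_V_def product_swap)

lemma KK_dist_swap [simp]: "KK_dist (prod.swap x) (prod.swap y) = KK_dist x y"
  by (cases x; cases y) (auto simp: KK_dist_def KK_E_def)

lemma delta_S_KK_swap:
  assumes "n \<ge> 3" "S \<subseteq> KK_V n" "x \<in> KK_V n" "y \<in> KK_V n"
  shows "delta_S (KK_V n) KK_E (prod.swap ` S) (prod.swap x) (prod.swap y)
       = delta_S (KK_V n) KK_E S x y"
proof -
  have "delta_S (KK_V n) KK_E (prod.swap ` S) (prod.swap x) (prod.swap y)
      = (\<Sum>z\<in>S. delta_z (KK_V n) KK_E (prod.swap z) (prod.swap x) (prod.swap y))"
    unfolding delta_S_def by (simp add: sum.reindex)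
  also have "\<dots> = delta_S (KK_V n) KK_E S x y"
    unfolding delta_S_def
  proof (rule sum.cong[OF refl])
    fix z assume "z \<in> S"
    then show "delta_z (KK_V n) KK_E (prod.swap z) (prod.swap x) (prod.swap y)
        = delta_z (KK_V n) KK_E z x y"
      using assms delta_z_KK[of n "prod.swap x" "prod.swap y" "prod.swap z"] delta_z_KK[of n x y z]
      by auto
  qed
  finally show ?thesis .
qed

lemma delta_S_KK_same_row:
  assumes "n \<ge> 3" "(r, a) \<in> KK_V n" "(r, b) \<in> KK_V n" "a \<noteq> b"
  shows "delta_S (KK_V n) KK_E (KK_V n) (r, a) (r, b) = 2 * n + 2"
proof -
  have rab: "r \<in> {1..n}" "a \<in> {1..n}" "b \<in> {1..n}"
    using assms(2,3) by auto
  have "delta_S (KK_V n) KK_E (KK_V n) (r, a) (r, b)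
      = (\<Sum>i=1..n. \<Sum>j=1..n. (if j = a then (if i = r then 2 else 1) else 0)
                            + (if j = b then (if i = r then 2 else 1) else 0))"
    unfolding delta_S_def sum_KK_V using assms
    by (intro sum.cong refl) (auto simp: delta_z_KK KK_dist_def KK_E_def)
  also have "\<dots> = (\<Sum>i=1..n. 2 + (if i = r then 2 else 0))"
    using rab by (intro sum.cong refl) (simp add: sum.distrib)
  also have "\<dots> = 2 * n + 2"
    using rab by (simp only: sum.distrib) simp
  finally show ?thesis .
qed

lemma delta_S_KK_nonadjacent:
  assumes "n \<ge> 3" "x \<in> KK_V n" "y \<in> KK_V n" "x \<noteq> y" "\<not> KK_E x y"
  shows "delta_S (KK_V n) KK_E (KK_V n) x y = 2 * n + 2"
proof -
  obtain r a r' b where xy: "x = (r, a)" "y = (r', b)"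
    by fastforce
  consider "r = r'" "a \<noteq> b" | "a = b" "r \<noteq> r'"
    using assms(4,5) xy by (auto simp: KK_E_def)
  then show ?thesis
  proof cases
    case 1
    then show ?thesis
      using delta_S_KK_same_row assms(1-3) xy by simp
  next
    case 2
    have "delta_S (KK_V n) KK_E (KK_V n) x y
        = delta_S (KK_V n) KK_E (KK_V n) (prod.swap x) (prod.swap y)"
      using delta_S_KK_swap[of n "KK_V n" x y] assms(1-3) by (simp add: swap_image_KK_V)
    then show ?thesis
      using delta_S_KK_same_row[of n a r r'] assms(1-3) xy 2 by simp
  qed
qed

lemma sum_if_eq_0_else_1:
  assumes "finite A" "c \<in> A"
  shows "(\<Sum>j\<in>A. if j = c then 0 else 1 :: nat) = card A - 1"
  using assms by (simp add: sum.If_cases Diff_eq[symmetric])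

lemma delta_S_KK_adjacent:
  assumes "n \<ge> 3" "x \<in> KK_V n" "y \<in> KK_V n" "KK_E x y"
  shows "delta_S (KK_V n) KK_E (KK_V n) x y = 4 * n - 6"
proof -
  obtain r1 c1 r2 c2 where xy: "x = (r1, c1)" "y = (r2, c2)"
    by fastforce
  have ne: "r1 \<noteq> r2" "c1 \<noteq> c2"
    using assms(4) xy by (auto simp: KK_E_def)
  have rc: "r1 \<in> {1..n}" "r2 \<in> {1..n}" "c1 \<in> {1..n}" "c2 \<in> {1..n}"
    using assms(2,3) xy by auto
  have "delta_S (KK_V n) KK_E (KK_V n) x y
      = (\<Sum>i=1..n. \<Sum>j=1..n.
           if i = r1 then (if j = c2 then 0 else 1)
           else if i = r2 then (if j = c1 then 0 else 1)
           else (if j = c1 then 1 else 0) + (if j = c2 then 1 else 0))"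
    unfolding delta_S_def sum_KK_V using assms xy ne
    by (intro sum.cong refl) (auto simp: delta_z_KK KK_dist_def KK_E_def)
  also have "\<dots> = (\<Sum>i=1..n. 2 + (if i = r1 then n - 3 else 0) + (if i = r2 then n - 3 else 0))"
    using assms(1) ne rc by (intro sum.cong refl) (auto simp: sum_if_eq_0_else_1 sum.distrib)
  also have "\<dots> = 4 * n - 6"
    using assms(1) rc by (simp only: sum.distrib) simp
  finally show ?thesis .
qed

lemma delta_S_KK_le_twice_card:
  assumes "n \<ge> 3" "x \<in> KK_V n" "y \<in> KK_V n" "W \<subseteq> KK_V n"
  shows "delta_S (KK_V n) KK_E W x y \<le> 2 * card W"
proof -
  have "delta_z (KK_V n) KK_E z x y \<le> 2" if "z \<in> W" for z
    using assms that by (auto simp: delta_z_KK KK_dist_def)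
  then show ?thesis
    unfolding delta_S_def
    using sum_bounded_above[of W "\<lambda>z. delta_z (KK_V n) KK_E z x y" 2] by (simp add: mult.commute)
qed

lemma delta_S_KK_le_card_if_adjacent:
  assumes "n \<ge> 3" "x \<in> KK_V n" "y \<in> KK_V n" "W \<subseteq> KK_V n" "KK_E x y"
  shows "delta_S (KK_V n) KK_E W x y \<le> card W"
proof -
  have "delta_z (KK_V n) KK_E z x y \<le> 1" if "z \<in> W" for z
  proof -
    have "z \<in> KK_V n"
      using that assms(4) by blast
    then show ?thesis
      using assms(1-3,5) by (cases x; cases y; cases z) (auto simp: delta_z_KK KK_dist_def KK_E_def)
  qed
  then show ?thesis
    unfolding delta_S_def
    using sum_bounded_above[of W "\<lambda>z. delta_z (KK_V n) KK_E z x y" 1] by simp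
qed

lemma delta_S_KK_diagonal_le_3:
  assumes "n \<ge> 3" "I \<subseteq> {1..n}" "x \<in> KK_V n" "y \<in> KK_V n" "x \<noteq> y" "\<not> KK_E x y"
  shows "delta_S (KK_V n) KK_E ((\<lambda>i. (i, i)) ` I) x y \<le> 3"
proof -
  let ?D = "(\<lambda>i. (i, i)) ` I"
  have fin: "finite I"
    using assms(2) finite_subset by blast
  \<comment> \<open>\<open>(i, i)\<close> separates \<open>(r, a)\<close> from \<open>(r, b)\<close> only for \<open>i \<in> {a, b}\<close>,
    and at most one of \<open>a, b\<close> is \<open>r\<close>.\<close>
  have same_row: "delta_S (KK_V n) KK_E ?D (r, a) (r, b) \<le> 3"
    if "(r, a) \<in> KK_V n" "(r, b) \<in> KK_V n" "a \<noteq> b" for r a b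
  proof -
    have "delta_S (KK_V n) KK_E ?D (r, a) (r, b)
        = (\<Sum>i\<in>I. (if i = a then (if a = r then 2 else 1) else 0)
                  + (if i = b then (if b = r then 2 else 1) else 0))"
      unfolding delta_S_def
    proof (subst sum.reindex, simp add: inj_on_def, intro sum.cong refl, unfold comp_apply)
      fix i assume "i \<in> I"
      then show "delta_z (KK_V n) KK_E (i, i) (r, a) (r, b)
          = (if i = a then (if a = r then 2 else 1) else 0)
            + (if i = b then (if b = r then 2 else 1) else 0)"
        using assms(1,2) that by (auto simp: delta_z_KK KK_dist_def KK_E_def)
    qed
    also have "\<dots> \<le> 3"
      using fin that(3) by (simp add: sum.distrib)
    finally show ?thesis .
  qed
  obtain r a r' b where xy: "x = (r, a)" "y = (r', b)"
    by fastforce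
  consider "r = r'" "a \<noteq> b" | "a = b" "r \<noteq> r'"
    using assms(5,6) xy by (auto simp: KK_E_def)
  then show ?thesis
  proof cases
    case 1
    then show ?thesis
      using same_row assms(3,4) xy by simp
  next
    case 2
    have "?D \<subseteq> KK_V n" "prod.swap ` ?D = ?D"
      using assms(2) by (auto simp: image_image)
    then have "delta_S (KK_V n) KK_E ?D x y = delta_S (KK_V n) KK_E ?D (prod.swap x) (prod.swap y)"
      using delta_S_KK_swap[of n ?D x y] assms(1,3,4) by simp
    then show ?thesis
      using same_row[of a r r'] assms(3,4) xy 2 by simp
  qed
qed

lemma weak_k_resolving_KK_Diff:
  assumes "n \<ge> 3" "W \<subseteq> KK_V n"
    and nonadjacent: "\<And>x y. x \<in> KK_V n \<Longrightarrow> y \<in> KK_V n \<Longrightarrow> x \<noteq> y \<Longrightarrow> \<not> KK_E x y \<Longrightarrow>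
      k + delta_S (KK_V n) KK_E W x y \<le> 2 * n + 2"
    and adjacent: "\<And>x y. x \<in> KK_V n \<Longrightarrow> y \<in> KK_V n \<Longrightarrow> KK_E x y \<Longrightarrow>
      k + delta_S (KK_V n) KK_E W x y \<le> 4 * n - 6"
  shows "weak_k_resolving (KK_V n) KK_E k (KK_V n - W)"
proof -
  have "k + delta_S (KK_V n) KK_E W x y \<le> delta_S (KK_V n) KK_E (KK_V n) x y"
    if "x \<in> KK_V n" "y \<in> KK_V n" "x \<noteq> y" for x y
    using that assms(1) nonadjacent adjacent
    by (cases "KK_E x y") (simp_all add: delta_S_KK_adjacent delta_S_KK_nonadjacent)
  moreover have "KK_V n - (KK_V n - W) = W"
    using assms(2) by blast
  ultimately show ?thesis
    unfolding weak_k_resolving_iff_loss[OF finite_KK_V] by auto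
qed

lemma not_weak_k_resolving_KK_missing_vertex:
  assumes "n \<ge> 3" "w \<in> KK_V n - S" "2 * n < k"
  shows "\<not> weak_k_resolving (KK_V n) KK_E k S"
proof -
  obtain r a where w: "w = (r, a)"
    by fastforce
  obtain b where b: "b \<in> {1..n}" "b \<noteq> a"
    using ex_avoiding_two[OF assms(1), of a a] by blast
  have y: "(r, b) \<in> KK_V n"
    using assms(2) w b by auto
  have "delta_S (KK_V n) KK_E {w} w (r, b) = 2"
    using assms(1,2) w y b by (simp add: delta_S_def delta_z_KK KK_dist_def KK_E_def)
  then show ?thesis
    using delta_S_KK_same_row[of n r a b] assms w y b
    by (intro not_weak_k_resolving_if_loss[OF finite_KK_V, where W="{w}" and x=w and y="(r, b)"])
      auto
qed

lemma not_weak_k_resolving_KK_missing_nonadjacent: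
  assumes "n \<ge> 3" "w1 \<in> KK_V n - S" "w2 \<in> KK_V n - S" "w1 \<noteq> w2" "\<not> KK_E w1 w2"
    and "2 * n - 2 < k"
  shows "\<not> weak_k_resolving (KK_V n) KK_E k S"
proof -
  have "delta_S (KK_V n) KK_E {w1, w2} w1 w2 = 4"
    using assms(1-5) by (auto simp: delta_S_def delta_z_KK KK_dist_def KK_E_def)
  then show ?thesis
    using delta_S_KK_nonadjacent[of n w1 w2] assms
    by (intro not_weak_k_resolving_if_loss[OF finite_KK_V, where W="{w1, w2}" and x=w1 and y=w2])
      auto
qed

lemma not_weak_k_resolving_KK_missing_adjacent:
  assumes "n \<ge> 3" "w1 \<in> KK_V n - S" "w2 \<in> KK_V n - S" "KK_E w1 w2" "2 * n - 1 < k"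
  shows "\<not> weak_k_resolving (KK_V n) KK_E k S"
proof -
  obtain r1 c1 r2 c2 where w: "w1 = (r1, c1)" "w2 = (r2, c2)"
    by fastforce
  have y: "(r1, c2) \<in> KK_V n" "c1 \<noteq> c2"
    using assms(2-4) w by (auto simp: KK_E_def)
  have "delta_S (KK_V n) KK_E {w1, w2} w1 (r1, c2) = 3"
    using assms(1-4) w y by (simp add: delta_S_def delta_z_KK KK_dist_def KK_E_def)
  then show ?thesis
    using delta_S_KK_same_row[of n r1 c1 c2] assms w y
    by (intro not_weak_k_resolving_if_loss[OF finite_KK_V, where W="{w1, w2}" and x=w1
          and y="(r1, c2)"]) auto
qed

lemma not_weak_k_resolving_KK_missing_clique4:
  assumes "n \<ge> 3" "{a, b, c, d} \<subseteq> KK_V n - S" "distinct [a, b, c, d]"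
    and clique: "\<forall>u\<in>{a, b, c, d}. \<forall>v\<in>{a, b, c, d}. u \<noteq> v \<longrightarrow> KK_E u v"
    and "4 * n - 10 < k"
  shows "\<not> weak_k_resolving (KK_V n) KK_E k S"
proof -
  have adj: "KK_E a b" "KK_E a c" "KK_E a d" "KK_E b c" "KK_E b d" "KK_E c d"
    using assms(3) clique by auto
  \<comment> \<open>Each of \<open>a, b, c, d\<close> lies in a line of one of the adjacent vertices \<open>?x, ?y\<close>
    and is adjacent to the other.\<close>
  let ?x = "(fst a, snd b)" and ?y = "(fst c, snd d)"
  have xy: "?x \<in> KK_V n" "?y \<in> KK_V n" "KK_E ?x ?y"
    using assms(2) adj(2,5) by (auto simp: KK_V_def KK_E_def)
  have "delta_z (KK_V n) KK_E z ?x ?y = 1" if "z \<in> {a, b, c, d}" for z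
  proof -
    have "z \<in> KK_V n"
      using that assms(2) by blast
    then have "delta_z (KK_V n) KK_E z ?x ?y = nat \<bar>int (KK_dist ?x z) - int (KK_dist ?y z)\<bar>"
      using delta_z_KK assms(1) xy(1,2) by blast
    also have "\<dots> = 1"
      using that adj by (elim insertE emptyE; auto simp: KK_dist_def KK_E_def prod_eq_iff)
    finally show ?thesis .
  qed
  with assms(3) have "delta_S (KK_V n) KK_E {a, b, c, d} ?x ?y = 4"
    by (simp add: delta_S_def)
  then show ?thesis
    using delta_S_KK_adjacent[OF assms(1) xy] assms(1,2,5) xy
    by (intro not_weak_k_resolving_if_loss[OF finite_KK_V, where W="{a, b, c, d}"
          and x="(fst a, snd b)" and y="(fst c, snd d)"]) (auto simp: KK_E_def)
qed

lemma card_KK_clique_le: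
  assumes "W \<subseteq> KK_V n" "\<And>w1 w2. w1 \<in> W \<Longrightarrow> w2 \<in> W \<Longrightarrow> w1 \<noteq> w2 \<Longrightarrow> KK_E w1 w2"
  shows "card W \<le> n"
proof -
  have "inj_on fst W"
    using assms(2) by (auto simp: inj_on_def KK_E_def)
  then have "card W = card (fst ` W)"
    by (simp add: card_image)
  also have "\<dots> \<le> card {1..n}"
    using assms(1) by (intro card_mono) (auto simp: KK_V_def)
  finally show ?thesis
    by simp
qed

lemma four_distinct_if_card_ge_4:
  assumes "4 \<le> card A"
  obtains a b c d where "{a, b, c, d} \<subseteq> A" "distinct [a, b, c, d]"
proof -
  obtain B where "B \<subseteq> A" "card B = 4"
    using obtain_subset_with_card_n[OF assms] by blast
  moreover from \<open>card B = 4\<close> have "\<exists>a b c d. B = {a, b, c, d} \<and> distinct [a, b, c, d]"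
    by (simp add: eval_nat_numeral card_Suc_eq) fastforce
  ultimately show ?thesis
    using that by blast
qed

theorem wdim_KK_gt_2n:
  assumes "n \<ge> 4" "2 * n < k" "k \<le> 2 * n + 2"
  shows "wdim (KK_V n) KK_E k = n\<^sup>2"
proof (rule wdim_eqI)
  have "weak_k_resolving (KK_V n) KK_E k (KK_V n - {})"
    by (rule weak_k_resolving_KK_Diff) (use assms in \<open>simp_all add: delta_S_def\<close>)
  then show "weak_k_resolving (KK_V n) KK_E k (KK_V n)"
    by simp
  show "card (KK_V n) = n\<^sup>2"
    by (rule card_KK_V)
next
  fix S assume "S \<subseteq> KK_V n" "card S < n\<^sup>2"
  then have "KK_V n - S \<noteq> {}"
    using card_KK_V_Diff[of S n] by auto
  then obtain w where "w \<in> KK_V n - S"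
    by blast
  then show "\<not> weak_k_resolving (KK_V n) KK_E k S"
    using assms by (intro not_weak_k_resolving_KK_missing_vertex[of n w S k]) auto
qed

theorem wdim_KK_2n:
  assumes "n \<ge> 4"
  shows "wdim (KK_V n) KK_E (2 * n) = n\<^sup>2 - 1"
proof (rule wdim_eqI)
  have "(1, 1) \<in> KK_V n"
    using assms by simp
  then show "weak_k_resolving (KK_V n) KK_E (2 * n) (KK_V n - {(1, 1)})"
  proof (intro weak_k_resolving_KK_Diff)
    fix x y assume "x \<in> KK_V n" "y \<in> KK_V n"
    then show "2 * n + delta_S (KK_V n) KK_E {(1, 1)} x y \<le> 2 * n + 2"
      using delta_S_KK_le_twice_card[of n x y "{(1, 1)}"] assms \<open>(1, 1) \<in> KK_V n\<close> by simp
    assume "KK_E x y"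
    then show "2 * n + delta_S (KK_V n) KK_E {(1, 1)} x y \<le> 4 * n - 6"
      using delta_S_KK_le_card_if_adjacent[of n x y "{(1, 1)}"] assms \<open>(1, 1) \<in> KK_V n\<close>
        \<open>x \<in> KK_V n\<close> \<open>y \<in> KK_V n\<close> by simp
  qed (use assms in auto)
  show "card (KK_V n - {(1, 1)}) = n\<^sup>2 - 1"
    using \<open>(1, 1) \<in> KK_V n\<close> card_KK_V_Diff[of "{(1, 1)}" n] by simp
next
  fix S assume "S \<subseteq> KK_V n" "card S < n\<^sup>2 - 1"
  then have "\<not> card (KK_V n - S) \<le> 1"
    using card_KK_V_Diff by simp
  then obtain w1 w2 where "w1 \<in> KK_V n - S" "w2 \<in> KK_V n - S" "w1 \<noteq> w2"
    using card_le_Suc0_iff_eq[of "KK_V n - S"] finite_KK_V by auto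
  then show "\<not> weak_k_resolving (KK_V n) KK_E (2 * n) S"
    using assms not_weak_k_resolving_KK_missing_adjacent not_weak_k_resolving_KK_missing_nonadjacent
    by (cases "KK_E w1 w2") auto
qed

theorem wdim_KK_2n_minus_1:
  assumes "n \<ge> 5"
  shows "wdim (KK_V n) KK_E (2 * n - 1) = n\<^sup>2 - n"
proof (rule wdim_eqI)
  let ?D = "(\<lambda>i. (i, i)) ` {1..n}"
  have D: "?D \<subseteq> KK_V n" "card ?D = n"
    by (auto simp: card_image inj_on_def)
  show "weak_k_resolving (KK_V n) KK_E (2 * n - 1) (KK_V n - ?D)"
  proof (intro weak_k_resolving_KK_Diff)
    fix x y assume "x \<in> KK_V n" "y \<in> KK_V n" "x \<noteq> y" "\<not> KK_E x y"
    then show "2 * n - 1 + delta_S (KK_V n) KK_E ?D x y \<le> 2 * n + 2"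
      using delta_S_KK_diagonal_le_3[of n "{1..n}" x y] assms by simp
  next
    fix x y assume "x \<in> KK_V n" "y \<in> KK_V n" "KK_E x y"
    then show "2 * n - 1 + delta_S (KK_V n) KK_E ?D x y \<le> 4 * n - 6"
      using delta_S_KK_le_card_if_adjacent[of n x y ?D] assms D by simp
  qed (use assms D in auto)
  show "card (KK_V n - ?D) = n\<^sup>2 - n"
    using D card_KK_V_Diff by simp
next
  fix S assume "S \<subseteq> KK_V n" "card S < n\<^sup>2 - n"
  then have "\<not> card (KK_V n - S) \<le> n"
    using card_KK_V_Diff by simp
  then obtain w1 w2 where "w1 \<in> KK_V n - S" "w2 \<in> KK_V n - S" "w1 \<noteq> w2" "\<not> KK_E w1 w2"
    using card_KK_clique_le[of "KK_V n - S" n] by blast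
  then show "\<not> weak_k_resolving (KK_V n) KK_E (2 * n - 1) S"
    using assms by (intro not_weak_k_resolving_KK_missing_nonadjacent[of n w1 S w2]) auto
qed

theorem wdim_KK_4_7: "wdim (KK_V 4) KK_E 7 = 13"
proof (rule wdim_eqI)
  let ?D = "(\<lambda>i. (i, i)) ` {1..3::nat}"
  have D: "?D \<subseteq> KK_V 4" "card ?D = 3"
    by (auto simp: card_image inj_on_def)
  show "weak_k_resolving (KK_V 4) KK_E 7 (KK_V 4 - ?D)"
  proof (intro weak_k_resolving_KK_Diff)
    fix x y assume "x \<in> KK_V 4" "y \<in> KK_V 4" "x \<noteq> y" "\<not> KK_E x y"
    then show "7 + delta_S (KK_V 4) KK_E ?D x y \<le> 2 * 4 + 2"
      using delta_S_KK_diagonal_le_3[of 4 "{1..3}" x y] by simp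
  next
    fix x y assume "x \<in> KK_V 4" "y \<in> KK_V 4" "KK_E x y"
    then show "7 + delta_S (KK_V 4) KK_E ?D x y \<le> 4 * 4 - 6"
      using delta_S_KK_le_card_if_adjacent[of 4 x y ?D] D by simp
  qed (use D in auto)
  show "card (KK_V 4 - ?D) = 13"
    using D card_KK_V_Diff by simp
next
  fix S assume "S \<subseteq> KK_V 4" "card S < 13"
  then have card_missing: "4 \<le> card (KK_V 4 - S)"
    using card_KK_V_Diff by simp
  show "\<not> weak_k_resolving (KK_V 4) KK_E 7 S"
  proof (cases "\<exists>w1\<in>KK_V 4 - S. \<exists>w2\<in>KK_V 4 - S. w1 \<noteq> w2 \<and> \<not> KK_E w1 w2")
    case True
    then obtain w1 w2 where "w1 \<in> KK_V 4 - S" "w2 \<in> KK_V 4 - S" "w1 \<noteq> w2" "\<not> KK_E w1 w2"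
      by blast
    then show ?thesis
      by (intro not_weak_k_resolving_KK_missing_nonadjacent[of 4 w1 S w2 7]) auto
  next
    case False
    obtain a b c d where abcd: "{a, b, c, d} \<subseteq> KK_V 4 - S" "distinct [a, b, c, d]"
      using four_distinct_if_card_ge_4[OF card_missing] by blast
    with False have "\<forall>u\<in>{a, b, c, d}. \<forall>v\<in>{a, b, c, d}. u \<noteq> v \<longrightarrow> KK_E u v"
      by blast
    with abcd show ?thesis
      by (intro not_weak_k_resolving_KK_missing_clique4) auto
  qed
qed

theorem mainTheorem6:
  fixes n k :: nat
  assumes "n \<ge> 4"
  shows "(k \<in> {2*n+1, 2*n+2} \<longrightarrow> wdim (KK_V n) KK_E k = n^2)
       \<and> (k = 2*n \<longrightarrow> wdim (KK_V n) KK_E k = n^2 - 1)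
       \<and> (k = 2*n - 1 \<and> n \<ge> 5 \<longrightarrow> wdim (KK_V n) KK_E k = n^2 - n)
       \<and> ((n, k) = (4, 7) \<longrightarrow> wdim (KK_V n) KK_E k = 13)"
  using wdim_KK_gt_2n[OF assms] wdim_KK_2n[OF assms] wdim_KK_2n_minus_1 wdim_KK_4_7 by auto

end
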